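(* Assume the setting and hypotheses (a)–(c) below. Suppose $\mathbf{P}_0(\bar x_0)$ is feasible, and define recursively, for all $k\ge0$, $\bar{\mathbf u}^*_k=(\bar u^*_{0|k},\dots,\bar u^*_{N-1|k})$ an optimal solution of $\mathbf{P}_k(\bar x_k)$ and $\bar x_{k+1}=A\bar x_k+B\bar u^*_{0|k}$. Let $\ell_k:=\bar x_k^TQ\bar x_k+(\bar u^*_{0|k})^TR\,\bar u^*_{0|k}+\mathrm{trace}[(Q+K^TRK)\Sigma_k]$ (which equals $\mathbb{E}[x_k^TQx_k+u_k^TRu_k]$ when $x_k=\bar x_k+\Delta x_k$ with $\mathbb{E}[\Delta x_k]=0$, $\mathbb{E}[\Delta x_k\Delta x_k^T]=\Sigma_k$ and $u_k=K\Delta x_k+\bar u^*_{0|k}$). Then $$\limsup_{M\to\infty}\frac{1}{M}\sum_{k=0}^{M-1}\ell_k\le\mathrm{trace}(SW).$$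
   Context: System data: $A\in\mathbb{R}^{n_x\times n_x}$, $B\in\mathbb{R}^{n_x\times n_u}$, feedback gain $K\in\mathbb{R}^{n_u\times n_x}$, $A_K:=A+BK$, noise covariance $W\succeq0$, $Q,R$ positive definite, horizon $N\ge 1$, $S$ the solution of $A_K^TSA_K-S=-Q-K^TRK$. $\bar\Sigma\succeq0$ solves $\bar\Sigma=A_K\bar\Sigma A_K^T+W$. Covariance sequence: $\Sigma_0\succeq 0$ with $\Sigma_0\preceq\bar\Sigma$ (e.g. $\Sigma_0=0$), $\Sigma_{j+1}=A_K\Sigma_jA_K^T+W$. Fix $a\in\mathbb{R}^{n_x}$, $c\in\mathbb{R}^{n_u}$, $b,d>0$, $p_x,p_u\in(0,1)$. For $\Sigma\succeq 0$, $\mathcal{X}(\Sigma)=\{\bar x:\ \exists\, y\ge 0,\ \lambda\in[0,b],\ y^2+a^T\Sigma a\le p_x(b-\lambda)^2,\ |a^T\bar x|\le y+\lambda\}$ and $\mathcal{U}(\Sigma)=\{\bar u:\ \exists\, y\ge 0,\ \lambda\in[0,d],\ y^2+c^TK\Sigma K^Tc\le p_u(d-\lambda)^2,\ |c^T\bar u|\le y+\lambda\}$; terminal set $\bar{\mathcal{X}}_f:=\mathcal{X}(\bar\Sigma)$. Problem $\mathbf{P}_k(\bar x)$: minimize over $\bar{\mathbf u}=(\bar u_0,\dots,\bar u_{N-1})$ the cost $J_k(\bar x,\bar{\mathbf u})=\sum_{l=0}^{N-1}(\bar x_l^TQ\bar x_l+\bar u_l^TR\bar u_l)+\bar x_N^TS\bar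 x_N+\sum_{l=0}^{N-1}\mathrm{trace}[(Q+K^TRK)\Sigma_{k+l}]+\mathrm{trace}(S\Sigma_{k+N})$ subject to $\bar x_0=\bar x$, $\bar x_{l+1}=A\bar x_l+B\bar u_l$, $\bar x_l\in\mathcal{X}(\Sigma_{k+l})$ and $\bar u_l\in\mathcal{U}(\Sigma_{k+l})$ for $l=0,\dots,N-1$, and $\bar x_N\in\bar{\mathcal{X}}_f$. Hypotheses: (a) $Kx\in\mathcal{U}(\Sigma_{k+N})$ for all $x\in\bar{\mathcal{X}}_f$ and all $k\ge0$; (b) all eigenvalues of $A_K$ have modulus $<1$; (c) $A_Kx\in\bar{\mathcal{X}}_f$ for all $x\in\bar{\mathcal{X}}_f$. *)

theory Defs
  imports "HOL-Analysis.Analysis"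
begin

definition psd :: "real^'n^'n \<Rightarrow> bool" where
  "psd M \<longleftrightarrow> transpose M = M \<and> (\<forall>x. 0 \<le> x \<bullet> (M *v x))"

definition pd :: "real^'n^'n \<Rightarrow> bool" where
  "pd M \<longleftrightarrow> transpose M = M \<and> (\<forall>x. x \<noteq> 0 \<longrightarrow> 0 < x \<bullet> (M *v x))"

definition loewner_le :: "real^'n^'n \<Rightarrow> real^'n^'n \<Rightarrow> bool" where
  "loewner_le M N \<longleftrightarrow> psd (N - M)"

definition is_eigenvalue :: "real^'n^'n \<Rightarrow> complex \<Rightarrow> bool" where
  "is_eigenvalue M \<mu> \<longleftrightarrow> (\<exists>v::complex^'n. v \<noteq> 0 \<and> map_matrix complex_of_real M *v v = \<mu> *s v)"

definition Xset :: "real^'n \<Rightarrow> real \<Rightarrow> real \<Rightarrow> real^'n^'n \<Rightarrow> (real^'n) set" where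
  "Xset a b px Sig = {xb. \<exists>y lam. 0 \<le> y \<and> 0 \<le> lam \<and> lam \<le> b \<and>
      y\<^sup>2 + a \<bullet> (Sig *v a) \<le> px * (b - lam)\<^sup>2 \<and> \<bar>a \<bullet> xb\<bar> \<le> y + lam}"

definition Uset :: "real^'n^'m \<Rightarrow> real^'m \<Rightarrow> real \<Rightarrow> real \<Rightarrow> real^'n^'n \<Rightarrow> (real^'m) set" where
  "Uset K c d pu Sig = {ub. \<exists>y lam. 0 \<le> y \<and> 0 \<le> lam \<and> lam \<le> d \<and>
      y\<^sup>2 + c \<bullet> ((K ** Sig ** transpose K) *v c) \<le> pu * (d - lam)\<^sup>2 \<and> \<bar>c \<bullet> ub\<bar> \<le> y + lam}"

fun covseq :: "real^'n^'n \<Rightarrow> real^'n^'n \<Rightarrow> real^'n^'n \<Rightarrow> nat \<Rightarrow> real^'n^'n" where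
  "covseq AK W S0 0 = S0"
| "covseq AK W S0 (Suc j) = AK ** covseq AK W S0 j ** transpose AK + W"

fun xpred :: "real^'n^'n \<Rightarrow> real^'m^'n \<Rightarrow> real^'n \<Rightarrow> (nat \<Rightarrow> real^'m) \<Rightarrow> nat \<Rightarrow> real^'n" where
  "xpred A B x u 0 = x"
| "xpred A B x u (Suc l) = A *v xpred A B x u l + B *v u l"

(* feasibility for P_k(x); Xs, Us are the constraint-set maps, Xf the terminal set,
   Sg the covariance sequence. Only u 0 .. u (N-1) matter. *)
definition feasibleP ::
  "real^'n^'n \<Rightarrow> real^'m^'n \<Rightarrow> (real^'n^'n \<Rightarrow> (real^'n) set) \<Rightarrow> (real^'n^'n \<Rightarrow> (real^'m) set)
   \<Rightarrow> (real^'n) set \<Rightarrow> nat \<Rightarrow> (nat \<Rightarrow> real^'n^'n) \<Rightarrow> nat \<Rightarrow> real^'n \<Rightarrow> (nat \<Rightarrow> real^'m) \<Rightarrow> bool" where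
  "feasibleP A B Xs Us Xf N Sg k x u \<longleftrightarrow>
     (\<forall>l<N. xpred A B x u l \<in> Xs (Sg (k + l)) \<and> u l \<in> Us (Sg (k + l))) \<and> xpred A B x u N \<in> Xf"

definition costJ ::
  "real^'n^'n \<Rightarrow> real^'m^'n \<Rightarrow> real^'n^'n \<Rightarrow> real^'m^'m \<Rightarrow> real^'n^'m \<Rightarrow> real^'n^'n
   \<Rightarrow> nat \<Rightarrow> (nat \<Rightarrow> real^'n^'n) \<Rightarrow> nat \<Rightarrow> real^'n \<Rightarrow> (nat \<Rightarrow> real^'m) \<Rightarrow> real" where
  "costJ A B Q R K S N Sg k x u =
     (\<Sum>l<N. xpred A B x u l \<bullet> (Q *v xpred A B x u l) + u l \<bullet> (R *v u l))
     + xpred A B x u N \<bullet> (S *v xpred A B x u N)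
     + (\<Sum>l<N. trace ((Q + transpose K ** R ** K) ** Sg (k + l)))
     + trace (S ** Sg (k + N))"

definition optimalP ::
  "real^'n^'n \<Rightarrow> real^'m^'n \<Rightarrow> real^'n^'n \<Rightarrow> real^'m^'m \<Rightarrow> real^'n^'m \<Rightarrow> real^'n^'n
   \<Rightarrow> (real^'n^'n \<Rightarrow> (real^'n) set) \<Rightarrow> (real^'n^'n \<Rightarrow> (real^'m) set) \<Rightarrow> (real^'n) set
   \<Rightarrow> nat \<Rightarrow> (nat \<Rightarrow> real^'n^'n) \<Rightarrow> nat \<Rightarrow> real^'n \<Rightarrow> (nat \<Rightarrow> real^'m) \<Rightarrow> bool" where
  "optimalP A B Q R K S Xs Us Xf N Sg k x u \<longleftrightarrow>
     feasibleP A B Xs Us Xf N Sg k x u \<and>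
     (\<forall>v. feasibleP A B Xs Us Xf N Sg k x v \<longrightarrow> costJ A B Q R K S N Sg k x u \<le> costJ A B Q R K S N Sg k x v)"

end

theory Submission
  imports Defs "Jordan_Normal_Form.Spectral_Radius"
begin

(* Let V_k be the optimal cost of P_k(xbar_k). Dropping the first input of the optimal sequence
   and appending the terminal feedback K x yields a feasible input for P_{k+1}(xbar_{k+1}) by
   hypotheses (a) and (c); by the Lyapunov equation for S its cost is exactly V_k - l_k + trace(S W),
   so V_{k+1} <= V_k - l_k + trace(S W). Summing, sum_{k<M} l_k <= V_0 - V_M + M trace(S W).
   Finally V_M is bounded below: S is positive semidefinite because A_K is stable, and the
   covariances Sigma_j stay between 0 and Sigma_bar, so all trace terms are bounded. *)

no_notation Matrix.scalar_prod (infix "\<bullet>" 70)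

section \<open>Stable matrices have bounded orbits\<close>

(* Spectral radius theory lives in Jordan_Normal_Form, whose matrices are indexed by naturals;
   an enumeration of the finite index type translates Cartesian matrices into that setting. *)
definition fin_index :: "'n::finite \<Rightarrow> nat" where
  "fin_index = (SOME f. bij_betw f (UNIV::'n set) {0..<CARD('n)})"

definition fin_elem :: "nat \<Rightarrow> 'n::finite" where
  "fin_elem = inv_into UNIV fin_index"

lemma bij_betw_fin_index: "bij_betw (fin_index::'n::finite \<Rightarrow> nat) UNIV {0..<CARD('n)}"
proof -
  obtain h where "bij_betw h (UNIV::'n set) {0..<CARD('n)}"
    using ex_bij_betw_finite_nat[of "UNIV::'n set"] by auto
  then show ?thesis
    unfolding fin_index_def by (rule someI[where P = "\<lambda>f. bij_betw f UNIV {0..<CARD('n)}"])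
qed

lemma bij_betw_fin_elem: "bij_betw (fin_elem::nat \<Rightarrow> 'n::finite) {0..<CARD('n)} UNIV"
  unfolding fin_elem_def using bij_betw_fin_index bij_betw_inv_into by blast

lemma fin_index_less: "fin_index (k::'n::finite) < CARD('n)"
  using bij_betw_fin_index[where 'n='n] by (auto simp: bij_betw_def)

lemma fin_elem_fin_index [simp]: "fin_elem (fin_index (k::'n::finite)) = k"
  unfolding fin_elem_def using bij_betw_fin_index[where 'n='n] by (simp add: bij_betw_def)

lemma fin_index_fin_elem [simp]: "i < CARD('n::finite) \<Longrightarrow> fin_index (fin_elem i :: 'n) = i"
  unfolding fin_elem_def using bij_betw_fin_index[where 'n='n] by (simp add: bij_betw_inv_into_right)

lemma sum_fin_elem: "(\<Sum>j<CARD('n::finite). g (fin_elem j :: 'n)) = (\<Sum>k\<in>UNIV. g k)"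
  using sum.reindex_bij_betw[OF bij_betw_fin_elem, of g] by (simp add: atLeast0LessThan)

definition complex_mat_of :: "real^'n^'n \<Rightarrow> complex mat" where
  "complex_mat_of M =
     Matrix.mat CARD('n::finite) CARD('n) (\<lambda>(i,j). complex_of_real (M $ fin_elem i $ fin_elem j))"

definition complex_vec_of :: "real^'n \<Rightarrow> complex Matrix.vec" where
  "complex_vec_of x = Matrix.vec CARD('n::finite) (\<lambda>i. complex_of_real (x $ fin_elem i))"

lemma complex_mat_of_carrier: "complex_mat_of (M::real^'n::finite^'n) \<in> carrier_mat CARD('n) CARD('n)"
  unfolding complex_mat_of_def by simp

lemma dim_complex_mat_of [simp]:
  "dim_row (complex_mat_of (M::real^'n::finite^'n)) = CARD('n)"
  "dim_col (complex_mat_of M) = CARD('n)"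
  unfolding complex_mat_of_def by simp_all

lemma complex_vec_of_carrier: "complex_vec_of (x::real^'n::finite) \<in> carrier_vec CARD('n)"
  unfolding complex_vec_of_def by simp

lemma complex_mat_of_mult_vec:
  "complex_mat_of M *\<^sub>v complex_vec_of x = complex_vec_of (M *v (x::real^'n::finite))"
proof (rule eq_vecI)
  fix i assume "i < dim_vec (complex_vec_of (M *v x))"
  then have i: "i < CARD('n)" by (simp add: complex_vec_of_def)
  have "(complex_mat_of M *\<^sub>v complex_vec_of x) $ i
      = (\<Sum>j<CARD('n). complex_of_real (M $ fin_elem i $ fin_elem j * x $ fin_elem j))"
    using i by (simp add: complex_mat_of_def complex_vec_of_def scalar_prod_def atLeast0LessThan)
  also have "\<dots> = (\<Sum>k\<in>UNIV. complex_of_real (M $ fin_elem i $ k * x $ k))"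
    by (rule sum_fin_elem)
  also have "\<dots> = complex_vec_of (M *v x) $ i"
    using i by (simp add: complex_vec_of_def matrix_vector_mult_def)
  finally show "(complex_mat_of M *\<^sub>v complex_vec_of x) $ i = complex_vec_of (M *v x) $ i" .
qed (simp add: complex_mat_of_def complex_vec_of_def)

lemma is_eigenvalue_if_eigenvalue_complex_mat_of:
  assumes "eigenvalue (complex_mat_of (M::real^'n::finite^'n)) \<mu>"
  shows "is_eigenvalue M \<mu>"
proof -
  from assms obtain v where v: "v \<in> carrier_vec CARD('n)" "v \<noteq> 0\<^sub>v CARD('n)"
    "complex_mat_of M *\<^sub>v v = \<mu> \<cdot>\<^sub>v v"
    unfolding eigenvalue_def eigenvector_def by (auto simp: complex_mat_of_def)
  define w :: "complex^'n" where "w = (\<chi> k. v $ fin_index k)"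
  from v(1,2) obtain i where i: "i < CARD('n)" "v $ i \<noteq> 0"
    by (metis carrier_vecD eq_vecI index_zero_vec(1) index_zero_vec(2))
  then have "w $ fin_elem i \<noteq> 0" by (simp add: w_def)
  then have "w \<noteq> 0" by auto
  moreover have "map_matrix complex_of_real M *v w = \<mu> *s w"
  proof (subst Finite_Cartesian_Product.vec_eq_iff, rule allI)
    fix k :: 'n
    have "(map_matrix complex_of_real M *v w) $ k = (\<Sum>l\<in>UNIV. complex_of_real (M $ k $ l) * w $ l)"
      by (simp add: matrix_vector_mult_def)
    also have "\<dots> = (\<Sum>j<CARD('n). complex_of_real (M $ k $ fin_elem j) * v $ j)"
      by (subst sum_fin_elem[symmetric]) (auto simp: w_def intro: sum.cong)
    also have "\<dots> = (complex_mat_of M *\<^sub>v v) $ fin_index k"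
      using fin_index_less[of k] v(1) by (simp add: complex_mat_of_def scalar_prod_def atLeast0LessThan)
    also have "\<dots> = (\<mu> *s w) $ k"
      using v(1,3) fin_index_less[of k] by (simp add: w_def)
    finally show "(map_matrix complex_of_real M *v w) $ k = (\<mu> *s w) $ k" .
  qed
  ultimately show ?thesis unfolding is_eigenvalue_def by blast
qed

lemma complex_vec_of_funpow:
  "complex_vec_of (((*v) M ^^ k) x) = complex_mat_of (M::real^'n::finite^'n) ^\<^sub>m k *\<^sub>v complex_vec_of x"
proof (induction k arbitrary: x)
  case 0
  show ?case using complex_vec_of_carrier[of x] by simp
next
  case (Suc k)
  have "complex_vec_of (((*v) M ^^ Suc k) x) = complex_mat_of M ^\<^sub>m k *\<^sub>v (complex_mat_of M *\<^sub>v complex_vec_of x)"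
    by (simp only: funpow_Suc_right o_def Suc complex_mat_of_mult_vec)
  also have "\<dots> = (complex_mat_of M ^\<^sub>m k * complex_mat_of M) *\<^sub>v complex_vec_of x"
    using complex_mat_of_carrier[of M] complex_vec_of_carrier[of x]
    by (simp add: assoc_mult_mat_vec[symmetric, of _ "CARD('n)" "CARD('n)" _ "CARD('n)"])
  finally show ?case by simp
qed

lemma spectral_radius_complex_mat_of_less_1:
  fixes M :: "real^'n::finite^'n"
  assumes "\<forall>\<mu>. is_eigenvalue M \<mu> \<longrightarrow> cmod \<mu> < 1"
  shows "spectral_radius (complex_mat_of M) < 1"
proof -
  obtain \<mu> where "\<mu> \<in> spectrum (complex_mat_of M)" "spectral_radius (complex_mat_of M) = cmod \<mu>"
    using spectral_radius_mem_max(1)[OF complex_mat_of_carrier, of M] by auto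
  with assms show ?thesis
    unfolding spectrum_def by (auto dest: is_eigenvalue_if_eigenvalue_complex_mat_of)
qed

lemma funpow_mult_vec_component_bound:
  fixes M :: "real^'n::finite^'n"
  assumes "norm_bound (complex_mat_of M ^\<^sub>m k) c"
  shows "\<bar>((*v) M ^^ k) x $ i\<bar> \<le> c * (\<Sum>l\<in>UNIV. \<bar>x $ l\<bar>)"
proof -
  let ?P = "complex_mat_of M ^\<^sub>m k" and ?n = "CARD('n)"
  have P: "?P \<in> carrier_mat ?n ?n" using complex_mat_of_carrier[of M] by simp
  have "complex_of_real (((*v) M ^^ k) x $ i) = complex_vec_of (((*v) M ^^ k) x) $ fin_index i"
    using fin_index_less[of i] by (simp add: complex_vec_of_def)
  also have "\<dots> = (\<Sum>j<?n. ?P $$ (fin_index i, j) * complex_of_real (x $ fin_elem j))"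
    unfolding complex_vec_of_funpow using carrier_matD[OF P] fin_index_less[of i]
    by (simp add: scalar_prod_def complex_vec_of_def atLeast0LessThan)
  finally have "\<bar>((*v) M ^^ k) x $ i\<bar> = norm (\<Sum>j<?n. ?P $$ (fin_index i, j) * complex_of_real (x $ fin_elem j))"
    by (metis norm_of_real)
  also have "\<dots> \<le> (\<Sum>j<?n. norm (?P $$ (fin_index i, j)) * \<bar>x $ fin_elem j\<bar>)"
    by (rule order_trans[OF norm_sum]) (simp add: norm_mult)
  also have "\<dots> \<le> (\<Sum>j<?n. c * \<bar>x $ fin_elem j\<bar>)"
    using assms P fin_index_less[of i] unfolding norm_bound_def
    by (intro sum_mono mult_right_mono) auto
  also have "\<dots> = c * (\<Sum>l\<in>UNIV. \<bar>x $ l\<bar>)"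
    by (simp add: sum_distrib_left[symmetric] sum_fin_elem[of "\<lambda>l. \<bar>x $ l\<bar>"])
  finally show ?thesis .
qed

lemma stable_matrix_orbit_bounded:
  fixes M :: "real^'n::finite^'n"
  assumes "\<forall>\<mu>. is_eigenvalue M \<mu> \<longrightarrow> cmod \<mu> < 1"
  shows "\<exists>B. \<forall>k. norm (((*v) M ^^ k) x) \<le> B"
proof -
  obtain c where c: "\<And>k. norm_bound (complex_mat_of M ^\<^sub>m k) c"
    using spectral_radius_jnf_norm_bound_less_1_upper_triangular[OF complex_mat_of_carrier
        spectral_radius_complex_mat_of_less_1[OF assms]] by auto
  have "norm (((*v) M ^^ k) x) \<le> CARD('n) * (c * (\<Sum>l\<in>UNIV. \<bar>x $ l\<bar>))" for k
  proof -
    have "norm (((*v) M ^^ k) x) \<le> (\<Sum>i\<in>UNIV. \<bar>((*v) M ^^ k) x $ i\<bar>)"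
      by (rule norm_le_l1_cart)
    also have "\<dots> \<le> (\<Sum>i\<in>(UNIV::'n set). c * (\<Sum>l\<in>UNIV. \<bar>x $ l\<bar>))"
      by (intro sum_mono funpow_mult_vec_component_bound c)
    finally show ?thesis by simp
  qed
  then show ?thesis by blast
qed

section \<open>Quadratic forms and the Lyapunov equation\<close>

lemma inner_congruence:
  fixes A :: "real^'n::finite^'m::finite" and x :: "real^'n"
  shows "x \<bullet> ((transpose A ** D ** A) *v x) = (A *v x) \<bullet> (D *v (A *v x))"
proof -
  have "x \<bullet> ((transpose A ** D ** A) *v x) = x \<bullet> (transpose A *v (D *v (A *v x)))"
    by (simp only: matrix_vector_mul_assoc matrix_mul_assoc)
  then show ?thesis
    by (metis dot_lmul_matrix inner_commute transpose_matrix_vector)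
qed

lemma abs_quadratic_form_le:
  fixes S :: "real^'n::finite^'n"
  obtains L where "L > 0" "\<And>z. \<bar>z \<bullet> (S *v z)\<bar> \<le> L * (norm z)\<^sup>2"
proof -
  obtain L where L: "L > 0" "\<And>z. norm (S *v z) \<le> norm z * L"
    using bounded_linear.pos_bounded[OF matrix_vector_mul_bounded_linear[of S]] by blast
  have "\<bar>z \<bullet> (S *v z)\<bar> \<le> L * (norm z)\<^sup>2" for z
  proof -
    have "\<bar>z \<bullet> (S *v z)\<bar> \<le> norm z * norm (S *v z)" by (rule Cauchy_Schwarz_ineq2)
    also have "\<dots> \<le> norm z * (norm z * L)" by (rule mult_left_mono[OF L(2)]) simp
    finally show ?thesis by (simp add: power2_eq_square mult_ac)
  qed
  with L(1) that show ?thesis by blast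
qed

lemma pd_quadratic_nonneg: "pd Q \<Longrightarrow> 0 \<le> x \<bullet> (Q *v x)"
  unfolding pd_def by (cases "x = 0") auto

lemma pd_quadratic_coercive:
  fixes Q :: "real^'n::finite^'n"
  assumes "pd Q"
  obtains q where "q > 0" "\<And>y. q * (norm y)\<^sup>2 \<le> y \<bullet> (Q *v y)"
proof -
  have "continuous_on (sphere 0 1) (\<lambda>y::real^'n. y \<bullet> (Q *v y))"
    by (intro continuous_intros bounded_linear.continuous_on[OF matrix_vector_mul_bounded_linear])
  moreover have "sphere (0::real^'n) 1 \<noteq> {}" by simp
  ultimately obtain z where z: "z \<in> sphere 0 1" "\<And>y. y \<in> sphere 0 1 \<Longrightarrow> z \<bullet> (Q *v z) \<le> y \<bullet> (Q *v y)"
    using continuous_attains_inf[OF compact_sphere] by blast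
  have "(z \<bullet> (Q *v z)) * (norm y)\<^sup>2 \<le> y \<bullet> (Q *v y)" for y
  proof (cases "y = 0")
    case False
    let ?u = "(1 / norm y) *\<^sub>R y"
    have "y \<bullet> (Q *v y) = (norm y)\<^sup>2 * (?u \<bullet> (Q *v ?u))"
      using False by (simp add: matrix_vector_mult_scaleR power2_eq_square)
    moreover have "z \<bullet> (Q *v z) \<le> ?u \<bullet> (Q *v ?u)"
      using False by (intro z(2)) (simp add: norm_scaleR)
    ultimately show ?thesis
      by (metis mult.commute mult_left_mono zero_le_power2)
  qed simp
  moreover have "z \<noteq> 0" using z(1) by auto
  then have "0 < z \<bullet> (Q *v z)"
    using assms unfolding pd_def by blast
  ultimately show ?thesis using that by blast
qed

lemma lyapunov_eq:
  fixes AK S Q :: "real^'n::finite^'n" and K :: "real^'n^'m::finite" and R :: "real^'m^'m"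
  assumes "transpose AK ** S ** AK - S = - Q - transpose K ** R ** K"
  shows "transpose AK ** S ** AK = S - (Q + transpose K ** R ** K)"
proof -
  have "transpose AK ** S ** AK = (transpose AK ** S ** AK - S) + S" by simp
  also have "\<dots> = S - (Q + transpose K ** R ** K)" unfolding assms by (simp add: algebra_simps)
  finally show ?thesis .
qed

lemma lyapunov_quadratic_step:
  fixes AK S Q :: "real^'n::finite^'n" and K :: "real^'n^'m::finite" and R :: "real^'m^'m"
  assumes "transpose AK ** S ** AK - S = - Q - transpose K ** R ** K"
  shows "(AK *v z) \<bullet> (S *v (AK *v z)) = z \<bullet> (S *v z) - z \<bullet> (Q *v z) - (K *v z) \<bullet> (R *v (K *v z))"
proof -
  have "(AK *v z) \<bullet> (S *v (AK *v z)) = z \<bullet> ((transpose AK ** S ** AK) *v z)"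
    by (rule inner_congruence[symmetric])
  also have "\<dots> = z \<bullet> (S *v z) - z \<bullet> (Q *v z) - z \<bullet> ((transpose K ** R ** K) *v z)"
    by (simp add: lyapunov_eq[OF assms] matrix_vector_mult_diff_rdistrib
        matrix_vector_mult_add_rdistrib inner_diff_right inner_add_right)
  also have "z \<bullet> ((transpose K ** R ** K) *v z) = (K *v z) \<bullet> (R *v (K *v z))"
    by (rule inner_congruence)
  finally show ?thesis .
qed

(* If x^T S x < 0, the form y^T S y decreases along the orbit y_j = A_K^j x and so stays below
   x^T S x; this keeps the orbit away from 0, hence the form drops by a fixed amount in each step,
   contradicting the boundedness of the orbit. *)
lemma lyapunov_solution_nonneg:
  fixes AK S Q :: "real^'n::finite^'n" and K :: "real^'n^'m::finite" and R :: "real^'m^'m"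
  assumes lyap: "transpose AK ** S ** AK - S = - Q - transpose K ** R ** K"
    and Q: "pd Q" and R: "pd R" and stable: "\<forall>\<mu>. is_eigenvalue AK \<mu> \<longrightarrow> cmod \<mu> < 1"
  shows "0 \<le> x \<bullet> (S *v x)"
proof (rule ccontr)
  define f where "f y = y \<bullet> (S *v y)" for y
  define y where "y j = ((*v) AK ^^ j) x" for j
  define e where "e = - f x"
  assume "\<not> 0 \<le> x \<bullet> (S *v x)"
  then have e: "0 < e" by (simp add: e_def f_def)
  obtain q where q: "q > 0" "\<And>z. q * (norm z)\<^sup>2 \<le> z \<bullet> (Q *v z)"
    using pd_quadratic_coercive[OF Q] by blast
  obtain L where L: "L > 0" and f_abs: "\<And>z. \<bar>f z\<bar> \<le> L * (norm z)\<^sup>2"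
    using abs_quadratic_form_le[of S] unfolding f_def by blast
  obtain B where B: "\<And>j. norm (y j) \<le> B"
    using stable_matrix_orbit_bounded[OF stable, of x] unfolding y_def by blast
  have f_step: "f (y (Suc j)) \<le> f (y j) - q * (norm (y j))\<^sup>2" for j
    using lyapunov_quadratic_step[OF lyap, of "y j"] q(2)[of "y j"] pd_quadratic_nonneg[OF R, of "K *v y j"]
    by (simp add: y_def f_def)
  have f_le: "f (y j) \<le> - e" for j
  proof (induction j)
    case (Suc j)
    then show ?case using f_step[of j] q(1) by (smt (verit) mult_nonneg_nonneg zero_le_power2)
  qed (simp add: y_def e_def)
  have gap: "e / L \<le> (norm (y j))\<^sup>2" for j
    using f_le[of j] f_abs[of "y j"] L(1) by (simp add: pos_divide_le_eq mult.commute)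
  define r where "r = q * (e / L)"
  have r: "0 < r" using q(1) e L(1) by (simp add: r_def)
  have f_linear: "f (y j) \<le> - e - real j * r" for j
  proof (induction j)
    case (Suc j)
    have "r \<le> q * (norm (y j))\<^sup>2" unfolding r_def using q(1) by (intro mult_left_mono gap) simp
    with Suc f_step[of j] show ?case by (simp add: algebra_simps)
  qed (simp add: y_def e_def)
  have f_lower: "- (L * B\<^sup>2) \<le> f (y j)" for j
  proof -
    have "(norm (y j))\<^sup>2 \<le> B\<^sup>2" using B[of j] by (intro power_mono) auto
    then have "L * (norm (y j))\<^sup>2 \<le> L * B\<^sup>2" using L(1) by (simp add: mult_left_mono)
    then show ?thesis using f_abs[of "y j"] by linarith
  qed
  obtain j :: nat where "(L * B\<^sup>2) / r < real j" using reals_Archimedean2 by blast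
  then have "L * B\<^sup>2 < real j * r" using r by (simp add: pos_divide_less_eq)
  with f_linear[of j] f_lower[of j] e show False by linarith
qed

lemma trace_lyapunov_step:
  fixes AK S Q C W :: "real^'n::finite^'n" and K :: "real^'n^'m::finite" and R :: "real^'m^'m"
  assumes "transpose AK ** S ** AK - S = - Q - transpose K ** R ** K"
  shows "trace (S ** (AK ** C ** transpose AK + W))
     = trace (S ** C) - trace ((Q + transpose K ** R ** K) ** C) + trace (S ** W)"
proof -
  have "trace (S ** (AK ** C ** transpose AK)) = trace (transpose AK ** (S ** AK ** C))"
    by (metis matrix_mul_assoc trace_mul_sym)
  also have "\<dots> = trace ((S - (Q + transpose K ** R ** K)) ** C)"
    by (simp only: matrix_mul_assoc lyapunov_eq[OF assms])
  also have "\<dots> = trace (S ** C) - trace ((Q + transpose K ** R ** K) ** C)"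
    by (simp add: trace_def matrix_matrix_mult_def sum_subtractf left_diff_distrib)
  finally show ?thesis by (simp add: matrix_add_ldistrib trace_add)
qed

section \<open>Covariance sequence\<close>

lemma psd_quadratic_nonneg: "psd M \<Longrightarrow> 0 \<le> x \<bullet> (M *v x)"
  unfolding psd_def by blast

lemma loewner_le_quadratic:
  "loewner_le M N \<Longrightarrow> x \<bullet> (M *v x) \<le> x \<bullet> (N *v (x::real^'n::finite))"
  unfolding loewner_le_def psd_def by (simp add: matrix_vector_mult_diff_rdistrib inner_diff_right)

lemma psd_add: "psd M \<Longrightarrow> psd N \<Longrightarrow> psd (M + N)"
  unfolding psd_def
  by (simp add: matrix_vector_mult_add_rdistrib inner_add_right transpose_def
      Finite_Cartesian_Product.vec_eq_iff)

lemma psd_congruence: "psd M \<Longrightarrow> psd (A ** M ** transpose A)"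
  for M :: "real^'n::finite^'n" and A :: "real^'n^'m::finite"
  unfolding psd_def
  using inner_congruence[of _ "transpose A" M]
  by (simp add: matrix_transpose_mul matrix_mul_assoc)

lemma psd_covseq: "psd W \<Longrightarrow> psd S0 \<Longrightarrow> psd (covseq AK W S0 j)"
  by (induction j) (simp_all add: psd_add psd_congruence)

lemma covseq_loewner_le:
  fixes AK W S0 Sb :: "real^'n::finite^'n"
  assumes "loewner_le S0 Sb" and Sb: "Sb = AK ** Sb ** transpose AK + W"
  shows "loewner_le (covseq AK W S0 j) Sb"
proof (induction j)
  case (Suc j)
  have "Sb - covseq AK W S0 (Suc j) = AK ** (Sb - covseq AK W S0 j) ** transpose AK"
    by (subst (1) Sb) (simp add: matrix_matrix_mult_def sum_subtractf right_diff_distrib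
        left_diff_distrib Finite_Cartesian_Product.vec_eq_iff)
  with Suc show ?case unfolding loewner_le_def by (simp add: psd_congruence)
qed (use assms in simp)

lemma Xset_antimono: "loewner_le S1 S2 \<Longrightarrow> Xset a b px S2 \<subseteq> Xset a b px S1"
  unfolding Xset_def using loewner_le_quadratic[of S1 S2 a] by (smt (verit) Collect_mono)

lemma psd_abs_entry_le: "psd C \<Longrightarrow> 2 * \<bar>C $ i $ k\<bar> \<le> C $ i $ i + C $ k $ k"
  for C :: "real^'n::finite^'n"
proof -
  assume C: "psd C"
  have quad: "(axis i 1 + s *\<^sub>R axis k 1) \<bullet> (C *v (axis i 1 + s *\<^sub>R axis k 1))
      = C $ i $ i + s * C $ i $ k + s * C $ k $ i + s * s * C $ k $ k" for s
    by (simp add: matrix_vector_right_distrib matrix_vector_mult_scaleR inner_add_left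
        inner_add_right inner_axis' matrix_vector_mult_basis column_def algebra_simps)
  have "transpose C $ i $ k = C $ i $ k"
    using C unfolding psd_def by simp
  then have sym: "C $ k $ i = C $ i $ k"
    by (simp add: transpose_def)
  have "0 \<le> C $ i $ i + C $ i $ k + C $ k $ i + C $ k $ k"
    using psd_quadratic_nonneg[OF C, of "axis i 1 + 1 *\<^sub>R axis k 1"] unfolding quad by simp
  moreover have "0 \<le> C $ i $ i - C $ i $ k - C $ k $ i + C $ k $ k"
    using psd_quadratic_nonneg[OF C, of "axis i 1 + (-1) *\<^sub>R axis k 1"] unfolding quad by simp
  ultimately show ?thesis
    using sym by (auto simp: abs_if)
qed

lemma trace_mult_bounded:
  fixes C :: "nat \<Rightarrow> real^'n::finite^'n" and P Sb :: "real^'n^'n"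
  assumes psd: "\<And>j. psd (C j)" and le: "\<And>j. loewner_le (C j) Sb"
  obtains T where "\<And>j. \<bar>trace (P ** C j)\<bar> \<le> T"
proof -
  define T0 where "T0 = (\<Sum>i\<in>UNIV. \<bar>Sb $ i $ i\<bar>)"
  have diag: "C j $ i $ i \<le> T0" for j i
  proof -
    have "C j $ i $ i \<le> Sb $ i $ i"
      using loewner_le_quadratic[OF le[of j], of "axis i 1"]
      by (simp add: inner_axis' matrix_vector_mult_basis column_def)
    also have "\<dots> \<le> T0" unfolding T0_def by (rule order_trans[OF abs_ge_self], rule member_le_sum) auto
    finally show ?thesis .
  qed
  have entry: "\<bar>C j $ i $ k\<bar> \<le> T0" for j i k
    using psd_abs_entry_le[OF psd[of j], of i k] diag[of j i] diag[of j k] by linarith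
  have "\<bar>trace (P ** C j)\<bar> \<le> (\<Sum>i\<in>UNIV. \<Sum>k\<in>UNIV. \<bar>P $ i $ k\<bar> * T0)" for j
  proof -
    have "\<bar>trace (P ** C j)\<bar> = \<bar>\<Sum>i\<in>UNIV. \<Sum>k\<in>UNIV. P $ i $ k * C j $ k $ i\<bar>"
      by (simp add: trace_def matrix_matrix_mult_def)
    also have "\<dots> \<le> (\<Sum>i\<in>UNIV. \<Sum>k\<in>UNIV. \<bar>P $ i $ k\<bar> * \<bar>C j $ k $ i\<bar>)"
      by (rule order_trans[OF sum_abs], rule sum_mono, rule order_trans[OF sum_abs]) (simp add: abs_mult)
    also have "\<dots> \<le> (\<Sum>i\<in>UNIV. \<Sum>k\<in>UNIV. \<bar>P $ i $ k\<bar> * T0)"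
      by (intro sum_mono mult_left_mono entry) auto
    finally show ?thesis .
  qed
  then show ?thesis using that by blast
qed

section \<open>The receding-horizon step\<close>

definition shifted_input ::
  "real^'n^'n \<Rightarrow> real^'m^'n \<Rightarrow> real^'n^'m \<Rightarrow> nat \<Rightarrow> real^'n \<Rightarrow> (nat \<Rightarrow> real^'m) \<Rightarrow> nat \<Rightarrow> real^'m" where
  "shifted_input A B K N x u l = (if Suc l < N then u (Suc l) else K *v xpred A B x u N)"

lemma xpred_shifted_input:
  "l < N \<Longrightarrow> xpred A B (A *v x + B *v u 0) (shifted_input A B K N x u) l = xpred A B x u (Suc l)"
  by (induction l) (simp_all add: shifted_input_def)

lemma xpred_shifted_input_horizon:
  assumes "N \<ge> 1"
  shows "xpred A B (A *v x + B *v u 0) (shifted_input A B K N x u) N = (A + B ** K) *v xpred A B x u N"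
proof -
  obtain N1 where N: "N = Suc N1" using assms by (cases N) auto
  then show ?thesis
    using xpred_shifted_input[of N1 N A B x u K]
    by (simp add: shifted_input_def matrix_vector_mult_add_rdistrib matrix_vector_mul_assoc)
qed

lemma feasibleP_shifted_input:
  assumes feas: "feasibleP A B Xs Us Xf N Sg k x u" and N: "N \<ge> 1"
    and Xf_sub: "Xf \<subseteq> Xs (Sg (k + N))"
    and terminal_input: "\<forall>y\<in>Xf. K *v y \<in> Us (Sg (k + N))"
    and terminal_invariant: "\<forall>y\<in>Xf. (A + B ** K) *v y \<in> Xf"
  shows "feasibleP A B Xs Us Xf N Sg (Suc k) (A *v x + B *v u 0) (shifted_input A B K N x u)"
proof -
  have terminal: "xpred A B x u N \<in> Xf" using feas unfolding feasibleP_def by blast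
  have "xpred A B (A *v x + B *v u 0) (shifted_input A B K N x u) l \<in> Xs (Sg (Suc k + l)) \<and>
        shifted_input A B K N x u l \<in> Us (Sg (Suc k + l))" if l: "l < N" for l
  proof (cases "Suc l < N")
    case True
    then have "xpred A B x u (Suc l) \<in> Xs (Sg (k + Suc l)) \<and> u (Suc l) \<in> Us (Sg (k + Suc l))"
      using feas unfolding feasibleP_def by blast
    then show ?thesis
      using l True by (simp add: xpred_shifted_input shifted_input_def del: xpred.simps)
  next
    case False
    with l have "Suc l = N" by simp
    then show ?thesis
      using terminal Xf_sub terminal_input l by (auto simp: xpred_shifted_input shifted_input_def)
  qed
  then show ?thesis
    using terminal terminal_invariant N unfolding feasibleP_def
    by (simp add: xpred_shifted_input_horizon)
qed

lemma nominal_cost_shifted_input: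
  fixes A :: "real^'n::finite^'n" and B :: "real^'m::finite^'n" and K :: "real^'n^'m"
    and x :: "real^'n" and u :: "nat \<Rightarrow> real^'m"
  assumes lyap: "transpose (A + B ** K) ** S ** (A + B ** K) - S = - Q - transpose K ** R ** K"
    and N: "N \<ge> 1"
  defines "X \<equiv> xpred A B x u" and "u' \<equiv> shifted_input A B K N x u"
  defines "X' \<equiv> xpred A B (A *v x + B *v u 0) u'"
  shows "(\<Sum>l<N. X' l \<bullet> (Q *v X' l) + u' l \<bullet> (R *v u' l)) + X' N \<bullet> (S *v X' N)
       = (\<Sum>l<N. X l \<bullet> (Q *v X l) + u l \<bullet> (R *v u l)) + X N \<bullet> (S *v X N)
         - (x \<bullet> (Q *v x) + u 0 \<bullet> (R *v u 0))"
proof -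
  obtain N1 where N1: "N = Suc N1" using N by (cases N) auto
  have "(\<Sum>l<N1. X' l \<bullet> (Q *v X' l) + u' l \<bullet> (R *v u' l))
      = (\<Sum>l<N1. X (Suc l) \<bullet> (Q *v X (Suc l)) + u (Suc l) \<bullet> (R *v u (Suc l)))"
    by (intro sum.cong) (simp_all add: N1 X'_def X_def u'_def xpred_shifted_input shifted_input_def
        del: xpred.simps)
  moreover have "X' N1 = X N" "u' N1 = K *v X N"
    by (simp_all add: N1 X'_def X_def u'_def xpred_shifted_input shifted_input_def del: xpred.simps)
  ultimately have "(\<Sum>l<N. X' l \<bullet> (Q *v X' l) + u' l \<bullet> (R *v u' l))
      = (\<Sum>l<N1. X (Suc l) \<bullet> (Q *v X (Suc l)) + u (Suc l) \<bullet> (R *v u (Suc l)))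
        + (X N \<bullet> (Q *v X N) + (K *v X N) \<bullet> (R *v (K *v X N)))"
    using N1 by simp
  moreover have "X' N \<bullet> (S *v X' N) = X N \<bullet> (S *v X N) - X N \<bullet> (Q *v X N) - (K *v X N) \<bullet> (R *v (K *v X N))"
    unfolding X'_def u'_def X_def xpred_shifted_input_horizon[OF N] by (rule lyapunov_quadratic_step[OF lyap])
  moreover have "(\<Sum>l<N. X l \<bullet> (Q *v X l) + u l \<bullet> (R *v u l))
      = (x \<bullet> (Q *v x) + u 0 \<bullet> (R *v u 0)) + (\<Sum>l<N1. X (Suc l) \<bullet> (Q *v X (Suc l)) + u (Suc l) \<bullet> (R *v u (Suc l)))"
    unfolding N1 sum.lessThan_Suc_shift by (simp add: X_def)
  ultimately show ?thesis by simp
qed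

lemma covariance_cost_shift:
  fixes S Q W :: "real^'n::finite^'n" and K :: "real^'n^'m::finite" and R :: "real^'m^'m"
  assumes lyap: "transpose AK ** S ** AK - S = - Q - transpose K ** R ** K"
    and Sg_step: "\<And>j. Sg (Suc j) = AK ** Sg j ** transpose AK + W"
  defines "M \<equiv> Q + transpose K ** R ** K"
  shows "(\<Sum>l<N. trace (M ** Sg (Suc k + l))) + trace (S ** Sg (Suc k + N))
       = (\<Sum>l<N. trace (M ** Sg (k + l))) + trace (S ** Sg (k + N)) - trace (M ** Sg k) + trace (S ** W)"
proof -
  have "(\<Sum>l<N. trace (M ** Sg (Suc k + l))) = (\<Sum>l<Suc N. trace (M ** Sg (k + l))) - trace (M ** Sg k)"
    unfolding sum.lessThan_Suc_shift by simp
  moreover have "trace (S ** Sg (Suc k + N)) = trace (S ** Sg (k + N)) - trace (M ** Sg (k + N)) + trace (S ** W)"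
    unfolding M_def by (simp add: Sg_step trace_lyapunov_step[OF lyap])
  ultimately show ?thesis by simp
qed

lemma costJ_shifted_input:
  fixes A :: "real^'n::finite^'n" and B :: "real^'m::finite^'n" and K :: "real^'n^'m"
  assumes lyap: "transpose (A + B ** K) ** S ** (A + B ** K) - S = - Q - transpose K ** R ** K"
    and Sg_step: "\<And>j. Sg (Suc j) = (A + B ** K) ** Sg j ** transpose (A + B ** K) + W"
    and N: "N \<ge> 1"
  shows "costJ A B Q R K S N Sg (Suc k) (A *v x + B *v u 0) (shifted_input A B K N x u)
       = costJ A B Q R K S N Sg k x u - (x \<bullet> (Q *v x) + u 0 \<bullet> (R *v u 0)
         + trace ((Q + transpose K ** R ** K) ** Sg k)) + trace (S ** W)"
  using nominal_cost_shifted_input[OF lyap N, of x u] covariance_cost_shift[where AK = "A + B ** K" and Sg = Sg and N = N and k = k, OF lyap Sg_step]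
  unfolding costJ_def by linarith

lemma optimal_cost_decrease:
  fixes A :: "real^'n::finite^'n" and B :: "real^'m::finite^'n" and K :: "real^'n^'m"
  assumes lyap: "transpose (A + B ** K) ** S ** (A + B ** K) - S = - Q - transpose K ** R ** K"
    and Sg_step: "\<And>j. Sg (Suc j) = (A + B ** K) ** Sg j ** transpose (A + B ** K) + W"
    and N: "N \<ge> 1"
    and Xf_sub: "Xf \<subseteq> Xs (Sg (k + N))"
    and terminal_input: "\<forall>y\<in>Xf. K *v y \<in> Us (Sg (k + N))"
    and terminal_invariant: "\<forall>y\<in>Xf. (A + B ** K) *v y \<in> Xf"
    and opt: "optimalP A B Q R K S Xs Us Xf N Sg k x u"
    and opt_next: "optimalP A B Q R K S Xs Us Xf N Sg (Suc k) (A *v x + B *v u 0) v"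
  shows "costJ A B Q R K S N Sg (Suc k) (A *v x + B *v u 0) v
       \<le> costJ A B Q R K S N Sg k x u - (x \<bullet> (Q *v x) + u 0 \<bullet> (R *v u 0)
         + trace ((Q + transpose K ** R ** K) ** Sg k)) + trace (S ** W)"
proof -
  have "feasibleP A B Xs Us Xf N Sg k x u"
    using opt unfolding optimalP_def by blast
  then have "feasibleP A B Xs Us Xf N Sg (Suc k) (A *v x + B *v u 0) (shifted_input A B K N x u)"
    using N Xf_sub terminal_input terminal_invariant by (rule feasibleP_shifted_input)
  then have "costJ A B Q R K S N Sg (Suc k) (A *v x + B *v u 0) v
      \<le> costJ A B Q R K S N Sg (Suc k) (A *v x + B *v u 0) (shifted_input A B K N x u)"
    using opt_next unfolding optimalP_def by blast
  then show ?thesis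
    by (simp only: costJ_shifted_input[where Sg = Sg, OF lyap Sg_step N])
qed

lemma costJ_bounded_below:
  assumes "pd Q" "pd R" "\<And>x. 0 \<le> x \<bullet> (S *v x)"
    and "\<And>j. psd (Sg j)" "\<And>j. loewner_le (Sg j) Sb"
  shows "\<exists>C. \<forall>k x u. C \<le> costJ A B Q R K S N Sg k x u"
proof -
  obtain T1 where T1: "\<And>j. \<bar>trace ((Q + transpose K ** R ** K) ** Sg j)\<bar> \<le> T1"
    using trace_mult_bounded assms(4,5) by blast
  obtain T2 where T2: "\<And>j. \<bar>trace (S ** Sg j)\<bar> \<le> T2"
    using trace_mult_bounded assms(4,5) by blast
  have "- (real N * T1 + T2) \<le> costJ A B Q R K S N Sg k x u" for k x u
  proof -
    have "(\<Sum>l<N. - T1) \<le> (\<Sum>l<N. trace ((Q + transpose K ** R ** K) ** Sg (k + l)))"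
      using T1 by (intro sum_mono) (smt (verit))
    then have "- (real N * T1) \<le> (\<Sum>l<N. trace ((Q + transpose K ** R ** K) ** Sg (k + l)))"
      by simp
    moreover have "- T2 \<le> trace (S ** Sg (k + N))" using T2[of "k + N"] by linarith
    moreover have "0 \<le> (\<Sum>l<N. xpred A B x u l \<bullet> (Q *v xpred A B x u l) + u l \<bullet> (R *v u l))"
      using assms(1,2) by (intro sum_nonneg add_nonneg_nonneg pd_quadratic_nonneg)
    moreover have "0 \<le> xpred A B x u N \<bullet> (S *v xpred A B x u N)" by (rule assms(3))
    ultimately show ?thesis unfolding costJ_def by linarith
  qed
  then show ?thesis by blast
qed

section \<open>Averaging a dissipation inequality\<close>

lemma limsup_average_le:
  fixes V l :: "nat \<Rightarrow> real"
  assumes step: "\<And>k. V (Suc k) \<le> V k - l k + t" and bounded: "\<And>k. C \<le> V k"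
  shows "limsup (\<lambda>M. ereal ((1 / real M) * (\<Sum>k<M. l k))) \<le> ereal t"
proof -
  define D where "D = V 0 - C"
  have telescope: "(\<Sum>k<M. l k) \<le> V 0 - V M + real M * t" for M
  proof (induction M)
    case (Suc M)
    then show ?case using step[of M] by (simp add: algebra_simps)
  qed simp
  have "(1 / real M) * (\<Sum>k<M. l k) \<le> t + D / real M" if "M \<ge> 1" for M
  proof -
    have "(\<Sum>k<M. l k) \<le> D + real M * t" using telescope[of M] bounded[of M] unfolding D_def by linarith
    then have "(1 / real M) * (\<Sum>k<M. l k) \<le> (1 / real M) * (D + real M * t)"
      by (rule mult_left_mono) simp
    also have "\<dots> = t + D / real M" using that by (simp add: field_simps)
    finally show ?thesis .
  qed
  then have "limsup (\<lambda>M. ereal ((1 / real M) * (\<Sum>k<M. l k))) \<le> limsup (\<lambda>M. ereal (t + D / real M))"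
    by (intro Limsup_mono eventually_sequentiallyI[of 1]) simp
  also have "\<dots> = ereal t"
    using tendsto_add[OF tendsto_const lim_const_over_n[of D]]
    by (intro lim_imp_Limsup) (simp_all add: lim_ereal)
  finally show ?thesis .
qed

theorem mainTheorem4:
  fixes A :: "real^'n^'n" and B :: "real^'m^'n" and K :: "real^'n^'m"
    and W Q S Sbar S0 :: "real^'n^'n" and R :: "real^'m^'m"
    and N :: nat and a x0 :: "real^'n" and c :: "real^'m" and b d px pu :: real
    and xb :: "nat \<Rightarrow> real^'n" and us :: "nat \<Rightarrow> nat \<Rightarrow> real^'m"
  defines "AK \<equiv> A + B ** K"
  defines "Sg \<equiv> covseq (A + B ** K) W S0"
  defines "Xf \<equiv> Xset a b px Sbar"
  assumes W_psd: "psd W" and Q_pd: "pd Q" and R_pd: "pd R" and N_ge: "N \<ge> 1"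
    and S_lyap: "transpose AK ** S ** AK - S = - Q - transpose K ** R ** K"
    and Sbar_psd: "psd Sbar" and Sbar_eq: "Sbar = AK ** Sbar ** transpose AK + W"
    and S0_psd: "psd S0" and S0_le: "loewner_le S0 Sbar"
    and b_pos: "b > 0" and d_pos: "d > 0"
    and px: "0 < px" "px < 1" and pu: "0 < pu" "pu < 1"
    and hyp_a: "\<forall>x\<in>Xf. \<forall>k. K *v x \<in> Uset K c d pu (Sg (k + N))"
    and hyp_b: "\<forall>\<mu>. is_eigenvalue AK \<mu> \<longrightarrow> cmod \<mu> < 1"
    and hyp_c: "\<forall>x\<in>Xf. AK *v x \<in> Xf"
    and feas0: "\<exists>u. feasibleP A B (Xset a b px) (Uset K c d pu) Xf N Sg 0 x0 u"
    and xb0: "xb 0 = x0"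
    and opt: "\<forall>k. optimalP A B Q R K S (Xset a b px) (Uset K c d pu) Xf N Sg k (xb k) (us k)"
    and xb_step: "\<forall>k. xb (Suc k) = A *v xb k + B *v us k 0"
  shows "limsup (\<lambda>M. ereal ((1 / real M) * (\<Sum>k<M.
            xb k \<bullet> (Q *v xb k) + us k 0 \<bullet> (R *v us k 0)
            + trace ((Q + transpose K ** R ** K) ** Sg k))))
         \<le> ereal (trace (S ** W))"
proof -
  define V where "V k = costJ A B Q R K S N Sg k (xb k) (us k)" for k
  have Sg_step: "\<And>j. Sg (Suc j) = (A + B ** K) ** Sg j ** transpose (A + B ** K) + W"
    unfolding Sg_def by simp
  have Sg_psd: "\<And>j. psd (Sg j)"
    unfolding Sg_def using W_psd S0_psd by (rule psd_covseq)
  have Sg_le: "\<And>j. loewner_le (Sg j) Sbar"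
    unfolding Sg_def using S0_le Sbar_eq unfolding AK_def by (rule covseq_loewner_le)
  have "V (Suc k) \<le> V k - (xb k \<bullet> (Q *v xb k) + us k 0 \<bullet> (R *v us k 0)
          + trace ((Q + transpose K ** R ** K) ** Sg k)) + trace (S ** W)" for k
  proof -
    have x_next: "xb (Suc k) = A *v xb k + B *v us k 0" using xb_step by blast
    show ?thesis unfolding V_def x_next
    proof (rule optimal_cost_decrease[where Sg = Sg, OF S_lyap[unfolded AK_def] Sg_step N_ge])
      show "Xf \<subseteq> Xset a b px (Sg (k + N))" unfolding Xf_def by (rule Xset_antimono[OF Sg_le])
      show "\<forall>y\<in>Xf. K *v y \<in> Uset K c d pu (Sg (k + N))" using hyp_a by blast
      show "\<forall>y\<in>Xf. (A + B ** K) *v y \<in> Xf" using hyp_c unfolding AK_def .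
      show "optimalP A B Q R K S (Xset a b px) (Uset K c d pu) Xf N Sg k (xb k) (us k)"
        using opt ..
      show "optimalP A B Q R K S (Xset a b px) (Uset K c d pu) Xf N Sg (Suc k)
          (A *v xb k + B *v us k 0) (us (Suc k))"
        using spec[OF opt, of "Suc k"] unfolding x_next .
    qed
  qed
  moreover obtain C where "\<And>k. C \<le> V k"
    using costJ_bounded_below[where A = A and B = B and K = K and N = N and Sg = Sg and Sb = Sbar,
        OF Q_pd R_pd lyapunov_solution_nonneg[OF S_lyap Q_pd R_pd hyp_b] Sg_psd Sg_le]
    unfolding V_def by blast
  ultimately show ?thesis by (rule limsup_average_le)
qed

end
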